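(* Let $(Q,\cdot,\times,\mathrm{tr}_\cdot,\mathrm{tr}_\times,\pi,\mu)$ be a character algebra with $1_\cdot\times1_\cdot=n1_\cdot$, and let $d=\dim Q$. (1) Both $(Q,\cdot)$ and $(Q,\times)$ are isomorphic as algebras to $\mathbb{C}^d$. Let $\{\mathrm{X}_i\}_{i=1}^d$ be the minimal idempotents of $(Q,\cdot)$ and $\{\Psi_j\}_{j=1}^d$ those of $(Q,\times)$. (2) $\pi\mathrm{X}_i=\mathrm{X}_i$ and $\mu\Psi_j=\Psi_j$ for all $i,j$; $\mu$ permutes the $\mathrm{X}_i$ and $\pi$ permutes the $\Psi_j$, defining involutions (also denoted $\mu,\pi$) of the index sets by $\mu\mathrm{X}_i=\mathrm{X}_{\mu(i)}$, $\pi\Psi_j=\Psi_{\pi(j)}$. (3) Setting $A_i:=(\mathrm{X}_i,\mathrm{X}_i)$, $B_j:=(\Psi_j,\Psi_j)$, $C_{ij}:=(\mathrm{X}_i,\Psi_j)$, one has $(\mathrm{X}_i,\mathrm{X}_{i'})=A_i\delta_{ii'}$, $(\Psi_j,\Psi_{j'})=B_j\delta_{jj'}$, $A_i=\mathrm{tr}_\cdot(\mathrm{X}_i)>0$, $B_j=\mathrm{tr}_\times(\Psi_j)>0$, and $$B_k\delta_{kl}=\sum_{i=1}^d A_i^{-1}\,\overline{C_{ik}}\,C_{il},\qquad A_i\delta_{ij}=\sum_{s=1}^d B_s^{-1}C_{is}\overline{C_{js}} .$$ Moreover $A_{\mu(i)}=A_i$, $B_{\pi(j)}=B_j$, $C_{i\pi(j)}=\overline{C_{ij}}$,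 $C_{\mu(i)j}=\overline{C_{ij}}$. (4) Conversely, the data $(A,B,C)$ together with the involutions $\mu,\pi$ on the index sets determine the character algebra up to isomorphism. (5) $1_\cdot/n$ is an idempotent for $\times$ and $1_\times$ is an idempotent for $\cdot$; writing $1_\cdot/n=\sum_j n_j\Psi_j$ and $1_\times=\sum_i m_i\mathrm{X}_i$ with $n_j,m_i\in\{0,1\}$, one has $$A_i=n\sum_j C_{ij}n_j,\qquad B_j=\sum_i C_{ij}m_i .$$ In particular, if $1_\cdot/n=\Psi_1$ and $1_\times=\mathrm{X}_1$, then $A_i=nC_{i1}$ and $B_j=C_{1j}$.
   Context: A character algebra is a finite-dimensional complex vector space $Q$ with two commutative associative unital bilinear products $\cdot$ (unit $1_\cdot$) and $\times$ (unit $1_\times$), two linear functionals $\mathrm{tr}_\cdot,\mathrm{tr}_\times:Q\to\mathbb{C}$, and two commuting complex-antilinear involutions $\pi,\mu$ of $Q$, each of which is a ring automorphism for both products, such that: (i) $\mathrm{tr}_\cdot(\pi a)=\mathrm{tr}_\cdot(\mu a)=\overline{\mathrm{tr}_\cdot(a)}$ and $\mathrm{tr}_\times(\pi a)=\mathrm{tr}_\times(\mu a)=\overline{\mathrm{tr}_\times(a)}$ for all $a$; (ii) $\mathrm{tr}_\cdot(a\cdot\pi b)=\mathrm{tr}_\times(a\times\mu b)$ for all $a,b$, and this common value is denoted $(a,b)$; (iii) $(a,a)>0$ for all $a\neq 0$; (iv) $1_\times\cdot 1_\times=1_\times$ and $1_\cdot\times 1_\cdot=n\,1_\cdot$ for some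 real $n>0$. An isomorphism of character algebras is a linear bijection intertwining both products, both functionals and both involutions. *)

theory Defs
  imports Complex_Main
begin

text \<open>A character algebra is packaged as a record over a type 'q whose additive
group structure is the ambient one; complex scalar multiplication is the field scl.\<close>

record 'q chalg =
  scl :: "complex \<Rightarrow> 'q \<Rightarrow> 'q"
  dotp :: "'q \<Rightarrow> 'q \<Rightarrow> 'q"
  one_dot :: 'q
  crossp :: "'q \<Rightarrow> 'q \<Rightarrow> 'q"
  one_cross :: 'q
  tr_dot :: "'q \<Rightarrow> complex"
  tr_cross :: "'q \<Rightarrow> complex"
  piQ :: "'q \<Rightarrow> 'q"
  muQ :: "'q \<Rightarrow> 'q"

definition ip :: "('q, 'z) chalg_scheme \<Rightarrow> 'q \<Rightarrow> 'q \<Rightarrow> complex" where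
  "ip Q a b = tr_dot Q (dotp Q a (piQ Q b))"

definition bilin_comm_unital ::
  "(complex \<Rightarrow> 'q::ab_group_add \<Rightarrow> 'q) \<Rightarrow> ('q \<Rightarrow> 'q \<Rightarrow> 'q) \<Rightarrow> 'q \<Rightarrow> bool" where
  "bilin_comm_unital s p u \<longleftrightarrow>
     (\<forall>a b. p a b = p b a) \<and> (\<forall>a b c. p (p a b) c = p a (p b c)) \<and> (\<forall>a. p u a = a) \<and>
     (\<forall>c a b e. p (s c a + b) e = s c (p a e) + p b e) \<and>
     (\<forall>c a b e. p e (s c a + b) = s c (p e a) + p e b)"

definition antilin_inv_aut ::
  "(complex \<Rightarrow> 'q::ab_group_add \<Rightarrow> 'q) \<Rightarrow> ('q \<Rightarrow> 'q \<Rightarrow> 'q) \<Rightarrow> ('q \<Rightarrow> 'q \<Rightarrow> 'q) \<Rightarrow> ('q \<Rightarrow> 'q) \<Rightarrow> bool" where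
  "antilin_inv_aut s p1 p2 f \<longleftrightarrow>
     (\<forall>c a b. f (s c a + b) = s (cnj c) (f a) + f b) \<and> (\<forall>a. f (f a) = a) \<and>
     (\<forall>a b. f (p1 a b) = p1 (f a) (f b)) \<and> (\<forall>a b. f (p2 a b) = p2 (f a) (f b))"

definition char_alg :: "('q::ab_group_add) chalg \<Rightarrow> real \<Rightarrow> bool" where
  "char_alg Q n \<longleftrightarrow>
     vector_space (scl Q) \<and> (\<exists>B. finite_dimensional_vector_space (scl Q) B) \<and>
     bilin_comm_unital (scl Q) (dotp Q) (one_dot Q) \<and>
     bilin_comm_unital (scl Q) (crossp Q) (one_cross Q) \<and>
     (\<forall>c a b. tr_dot Q (scl Q c a + b) = c * tr_dot Q a + tr_dot Q b) \<and>
     (\<forall>c a b. tr_cross Q (scl Q c a + b) = c * tr_cross Q a + tr_cross Q b) \<and>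
     antilin_inv_aut (scl Q) (dotp Q) (crossp Q) (piQ Q) \<and>
     antilin_inv_aut (scl Q) (dotp Q) (crossp Q) (muQ Q) \<and>
     (\<forall>a. piQ Q (muQ Q a) = muQ Q (piQ Q a)) \<and>
     (\<forall>a. tr_dot Q (piQ Q a) = cnj (tr_dot Q a) \<and> tr_dot Q (muQ Q a) = cnj (tr_dot Q a)) \<and>
     (\<forall>a. tr_cross Q (piQ Q a) = cnj (tr_cross Q a) \<and> tr_cross Q (muQ Q a) = cnj (tr_cross Q a)) \<and>
     (\<forall>a b. tr_dot Q (dotp Q a (piQ Q b)) = tr_cross Q (crossp Q a (muQ Q b))) \<and>
     (\<forall>a. a \<noteq> 0 \<longrightarrow> Im (ip Q a a) = 0 \<and> Re (ip Q a a) > 0) \<and>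
     dotp Q (one_cross Q) (one_cross Q) = one_cross Q \<and>
     n > 0 \<and> crossp Q (one_dot Q) (one_dot Q) = scl Q (complex_of_real n) (one_dot Q)"

definition cdim :: "('q::ab_group_add) chalg \<Rightarrow> nat" where
  "cdim Q = vector_space.dim (scl Q) (UNIV :: 'q set)"

definition min_idem :: "('q::ab_group_add \<Rightarrow> 'q \<Rightarrow> 'q) \<Rightarrow> 'q \<Rightarrow> bool" where
  "min_idem p e \<longleftrightarrow> e \<noteq> 0 \<and> p e e = e \<and> (\<forall>f. p f f = f \<and> p f e = f \<longrightarrow> f = 0 \<or> f = e)"

text \<open>C^d is modelled as the functions nat => complex vanishing outside {..<d}, with
pointwise operations; phi is a unital algebra isomorphism from (Q, p, u) onto it.\<close>
definition cd_alg_iso ::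
  "('q::ab_group_add) chalg \<Rightarrow> ('q \<Rightarrow> 'q \<Rightarrow> 'q) \<Rightarrow> 'q \<Rightarrow> nat \<Rightarrow> ('q \<Rightarrow> nat \<Rightarrow> complex) \<Rightarrow> bool" where
  "cd_alg_iso Q p u d \<phi> \<longleftrightarrow>
     (\<forall>c a b i. \<phi> (scl Q c a + b) i = c * \<phi> a i + \<phi> b i) \<and>
     bij_betw \<phi> UNIV {f. \<forall>i\<ge>d. f i = 0} \<and>
     (\<forall>a b i. \<phi> (p a b) i = \<phi> a i * \<phi> b i) \<and> (\<forall>i<d. \<phi> u i = 1)"

definition chalg_iso :: "('q::ab_group_add) chalg \<Rightarrow> ('r::ab_group_add) chalg \<Rightarrow> ('q \<Rightarrow> 'r) \<Rightarrow> bool" where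
  "chalg_iso Q Q' \<phi> \<longleftrightarrow>
     (\<forall>c a b. \<phi> (scl Q c a + b) = scl Q' c (\<phi> a) + \<phi> b) \<and> bij \<phi> \<and>
     (\<forall>a b. \<phi> (dotp Q a b) = dotp Q' (\<phi> a) (\<phi> b)) \<and>
     (\<forall>a b. \<phi> (crossp Q a b) = crossp Q' (\<phi> a) (\<phi> b)) \<and>
     (\<forall>a. tr_dot Q' (\<phi> a) = tr_dot Q a) \<and> (\<forall>a. tr_cross Q' (\<phi> a) = tr_cross Q a) \<and>
     (\<forall>a. \<phi> (piQ Q a) = piQ Q' (\<phi> a)) \<and> (\<forall>a. \<phi> (muQ Q a) = muQ Q' (\<phi> a))"

end

theory Submission
  imports Defs "HOL-Computational_Algebra.Fundamental_Theorem_Algebra"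
begin

(* Each of the two products makes Q a finite-dimensional commutative algebra with an antilinear
   involutive automorphism f and a trace t such that t(a f(a)) > 0 for a \<noteq> 0.  Such an algebra
   has no nilpotents, so every element is annihilated by a polynomial with simple roots, and
   Lagrange interpolation in that element splits any idempotent on which it does not act as a
   scalar.  Hence a largest family of orthogonal idempotents summing to 1 consists of the minimal
   idempotents, and their coefficients are characters identifying the algebra with C^d.
   Minimality makes f fix the minimal idempotents and the other involution permute them.
   Expanding the form (a,b) in the two bases of minimal idempotents gives the orthogonality
   relations; conversely the linear map matching the bases X_i of two such algebras preserves
   the product, and, when A, B, C and the permutation mu agree, also the cross coordinates,
   both traces and both involutions. *)

lemma prod_linear_factors_dvd:
  fixes g :: "complex poly"
  assumes "finite R" "\<forall>x\<in>R. poly g x = 0"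
  shows "(\<Prod>x\<in>R. [:-x, 1:]) dvd g"
  using assms
proof (induction R arbitrary: g rule: finite_induct)
  case (insert z R)
  then obtain r where r: "g = (\<Prod>x\<in>R. [:-x, 1:]) * r" by (meson dvd_def insertCI)
  have "poly (\<Prod>x\<in>R. [:-x, 1:]) z \<noteq> 0" using insert by (auto simp: poly_prod)
  moreover have "poly g z = 0" using insert by simp
  ultimately have "poly r z = 0" using r by simp
  then obtain r' where r': "r = [:-z, 1:] * r'" by (meson dvd_def poly_eq_0_iff_dvd)
  have "g = ([:-z, 1:] * (\<Prod>x\<in>R. [:-x, 1:])) * r'" unfolding r r' by (simp only: ac_simps)
  then show ?case using insert by simp
qed simp

definition lagrange_poly :: "complex set \<Rightarrow> complex \<Rightarrow> complex poly" where
  "lagrange_poly R l = (\<Prod>m\<in>R - {l}. smult (1 / (l - m)) [:-m, 1:])"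

lemma poly_lagrange_poly:
  assumes "finite R" "l \<in> R" "v \<in> R"
  shows "poly (lagrange_poly R l) v = (if v = l then 1 else 0)"
proof (cases "v = l")
  case True
  have "poly (lagrange_poly R l) v = (\<Prod>m\<in>R - {l}. poly (smult (1 / (l - m)) [:-m, 1:]) l)"
    using True by (simp add: lagrange_poly_def poly_prod)
  also have "\<dots> = 1" by (intro prod.neutral) (auto simp: diff_divide_distrib[symmetric])
  finally show ?thesis using True by simp
next
  case False
  have "poly (lagrange_poly R l) v = (\<Prod>m\<in>R - {l}. (v - m) / (l - m))"
    by (simp add: lagrange_poly_def poly_prod diff_divide_distrib)
  also have "\<dots> = 0" using assms False by (intro prod_zero) auto
  finally show ?thesis using False by simp
qed

lemma bij_betw_index_involution:
  assumes E: "bij_betw E {..<d::nat} S" and maps: "\<And>x. x \<in> S \<Longrightarrow> g x \<in> S"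
    and inv: "\<And>x. g (g x) = x"
  shows "\<exists>m. \<forall>i<d. m i < d \<and> m (m i) = i \<and> g (E i) = E (m i)"
proof -
  define m where "m i = inv_into {..<d} E (g (E i))" for i
  have m: "m i < d" "E (m i) = g (E i)" if "i < d" for i
    using E maps[of "E i"] that unfolding m_def
    by (auto simp: bij_betw_def intro: inv_into_into f_inv_into_f)
  have "m (m i) = i" if "i < d" for i
    using m[OF that] m[of "m i"] inv E that by (auto simp: bij_betw_def inj_on_def)
  then show ?thesis using m by metis
qed

section \<open>Commutative algebras with a positive trace\<close>

locale positive_star_algebra =
  fixes s :: "complex \<Rightarrow> 'q::ab_group_add \<Rightarrow> 'q" and p :: "'q \<Rightarrow> 'q \<Rightarrow> 'q" and u :: 'q
    and t :: "'q \<Rightarrow> complex" and f :: "'q \<Rightarrow> 'q"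
  assumes vs: "vector_space s"
    and fdim: "\<exists>B. finite_dimensional_vector_space s B"
    and bil: "bilin_comm_unital s p u"
    and tlin: "\<forall>c a b. t (s c a + b) = c * t a + t b"
    and star: "antilin_inv_aut s p p f"
    and tstar: "\<forall>a. t (f a) = cnj (t a)"
    and pos: "\<forall>a. a \<noteq> 0 \<longrightarrow> Im (t (p a (f a))) = 0 \<and> Re (t (p a (f a))) > 0"
begin

sublocale vector_space s by (rule vs)

lemma mult_commute: "p a b = p b a"
  using bil unfolding bilin_comm_unital_def by blast

lemma mult_assoc: "p (p a b) c = p a (p b c)"
  using bil unfolding bilin_comm_unital_def by blast

lemma mult_left_commute: "p a (p b c) = p b (p a c)"
  by (metis mult_assoc mult_commute)

lemma mult_one_left [simp]: "p u a = a"
  using bil unfolding bilin_comm_unital_def by blast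

lemma mult_one_right [simp]: "p a u = a"
  by (metis mult_commute mult_one_left)

lemma mult_linear_left: "p (s c a + b) e = s c (p a e) + p b e"
  using bil unfolding bilin_comm_unital_def by blast

lemma mult_zero_left [simp]: "p 0 e = 0"
  using mult_linear_left[of 1 0 0 e] by simp

lemma mult_zero_right [simp]: "p e 0 = 0"
  by (metis mult_commute mult_zero_left)

lemma mult_add_left: "p (a + b) e = p a e + p b e"
  using mult_linear_left[of 1 a b e] by simp

lemma mult_add_right: "p e (a + b) = p e a + p e b"
  by (metis mult_add_left mult_commute)

lemma mult_scale_left: "p (s c a) e = s c (p a e)"
  using mult_linear_left[of c a 0 e] by simp

lemma mult_scale_right: "p e (s c a) = s c (p e a)"
  by (metis mult_commute mult_scale_left)

lemma mult_sum_left: "p (\<Sum>i\<in>A. g i) e = (\<Sum>i\<in>A. p (g i) e)"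
  by (induction A rule: infinite_finite_induct) (auto simp: mult_add_left)

lemma mult_sum_right: "p e (\<Sum>i\<in>A. g i) = (\<Sum>i\<in>A. p e (g i))"
  by (induction A rule: infinite_finite_induct) (auto simp: mult_add_right)

lemma trace_add: "t (a + b) = t a + t b"
  using tlin[rule_format, of 1 a b] by simp

lemma trace_zero [simp]: "t 0 = 0"
  using trace_add[of 0 0] by simp

lemma trace_scale: "t (s c a) = c * t a"
  using tlin[rule_format, of c a 0] by simp

lemma trace_sum: "t (\<Sum>i\<in>A. g i) = (\<Sum>i\<in>A. t (g i))"
  by (induction A rule: infinite_finite_induct) (auto simp: trace_add)

lemma trace_star: "t (f a) = cnj (t a)"
  using tstar by blast

lemma card_le_dim: "independent S \<Longrightarrow> card S \<le> dim (UNIV :: 'q set)"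
proof -
  obtain B where "finite_dimensional_vector_space s B" using fdim by blast
  then interpret finite_dimensional_vector_space s B .
  show "independent S \<Longrightarrow> card S \<le> dim (UNIV :: 'q set)"
    by (intro independent_card_le_dim) auto
qed

end

locale conj_automorphism = positive_star_algebra +
  fixes g
  assumes aut: "antilin_inv_aut s p p g"
begin

lemma aut_linear: "g (s c a + b) = s (cnj c) (g a) + g b"
  using aut by (simp add: antilin_inv_aut_def)

lemma aut_involutive [simp]: "g (g a) = a"
  using aut by (simp add: antilin_inv_aut_def)

lemma aut_mult: "g (p a b) = p (g a) (g b)"
  using aut by (simp add: antilin_inv_aut_def)

lemma aut_zero [simp]: "g 0 = 0"
  using aut_linear[of 1 0 0] by simp

lemma aut_scale: "g (s c a) = s (cnj c) (g a)"
  using aut_linear[of c a 0] by simp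

lemma aut_eq_0_iff: "g a = 0 \<longleftrightarrow> a = 0"
  by (metis aut_involutive aut_zero)

lemma aut_one [simp]: "g u = u"
  by (metis aut_involutive aut_mult mult_one_left mult_one_right)

end

sublocale positive_star_algebra \<subseteq> star: conj_automorphism s p u t f f
  by unfold_locales (rule star)

context positive_star_algebra
begin

lemma mult_self_eq_0_imp_eq_0:
  assumes "p a a = 0" shows "a = 0"
proof -
  define b where "b = p a (f a)"
  have "p b (f b) = p (p a a) (p (f a) (f a))"
    by (simp add: b_def star.aut_mult mult_assoc) (metis mult_commute mult_left_commute)
  then have "b = 0" using pos assms by (metis less_irrefl mult_zero_left trace_zero zero_complex.sel(1))
  then show "a = 0" using pos by (metis b_def less_irrefl trace_zero zero_complex.sel(1))
qed

definition mpow :: "'q \<Rightarrow> nat \<Rightarrow> 'q" where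
  "mpow a k = (p a ^^ k) u"

lemma mpow_0 [simp]: "mpow a 0 = u"
  by (simp add: mpow_def)

lemma mpow_Suc [simp]: "mpow a (Suc k) = p a (mpow a k)"
  by (simp add: mpow_def)

lemma mpow_add: "mpow a (m + k) = p (mpow a m) (mpow a k)"
  by (induction m) (auto simp: mult_assoc)

lemma mpow_eq_0_imp_eq_0: "mpow a k = 0 \<Longrightarrow> a = 0"
proof (induction k rule: less_induct)
  case (less k)
  show ?case
  proof (cases "k \<le> 1")
    case True
    then consider "k = 0" | "k = 1" by linarith
    then show ?thesis
    proof cases
      case 1
      then have "u = 0" using less.prems by simp
      then show ?thesis using mult_one_left[of a] by simp
    next
      case 2
      then show ?thesis using less.prems by simp
    qed
  next
    case False
    define j where "j = (k + 1) div 2"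
    have jk: "j < k" "k \<le> j + j" using False by (auto simp: j_def)
    have "mpow a (j + j) = p (mpow a k) (mpow a (j + j - k))"
      using jk mpow_add[of a k "j + j - k"] by simp
    then have "p (mpow a j) (mpow a j) = 0" using less.prems by (simp add: mpow_add[symmetric])
    then show ?thesis using less.IH jk mult_self_eq_0_imp_eq_0 by blast
  qed
qed

definition peval :: "'q \<Rightarrow> complex poly \<Rightarrow> 'q" where
  "peval a q = (\<Sum>i\<le>degree q. s (coeff q i) (mpow a i))"

lemma peval_eq_sum_upto:
  "degree q \<le> N \<Longrightarrow> peval a q = (\<Sum>i\<le>N. s (coeff q i) (mpow a i))"
  unfolding peval_def by (intro sum.mono_neutral_left) (auto simp: coeff_eq_0)

lemma peval_add: "peval a (q1 + q2) = peval a q1 + peval a q2"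
proof -
  define N where "N = max (degree q1) (degree q2)"
  have "degree (q1 + q2) \<le> N" by (simp add: N_def degree_add_le)
  then show ?thesis
    by (simp add: peval_eq_sum_upto[of _ N] N_def sum.distrib[symmetric] scale_left_distrib)
qed

lemma peval_smult: "peval a (smult c q) = s c (peval a q)"
  by (simp add: peval_eq_sum_upto[of "smult c q" "degree q"] peval_def scale_sum_right)

lemma peval_0 [simp]: "peval a 0 = 0"
  by (simp add: peval_def)

lemma peval_1 [simp]: "peval a 1 = u"
  by (simp add: peval_def)

lemma peval_pCons: "peval a (pCons c q) = s c u + p a (peval a q)"
proof -
  have "peval a (pCons c q) = (\<Sum>i\<le>Suc (degree q). s (coeff (pCons c q) i) (mpow a i))"
    by (rule peval_eq_sum_upto) simp
  also have "\<dots> = s c u + (\<Sum>i\<le>degree q. s (coeff q i) (mpow a (Suc i)))"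
    by (subst sum.atMost_Suc_shift) simp
  also have "\<dots> = s c u + p a (peval a q)"
    by (simp add: peval_def mult_sum_right mult_scale_right)
  finally show ?thesis .
qed

lemma peval_X [simp]: "peval a [:0, 1:] = a"
  by (simp add: peval_pCons)

lemma peval_mult: "peval a (q1 * q2) = p (peval a q1) (peval a q2)"
proof (induction q1 rule: pCons_induct)
  case (pCons c q)
  have "peval a (pCons c q * q2) = s c (peval a q2) + peval a (pCons 0 (q * q2))"
    by (simp add: peval_add peval_smult)
  also have "peval a (pCons 0 (q * q2)) = p a (p (peval a q) (peval a q2))"
    using pCons by (simp add: peval_pCons)
  finally show ?case by (simp add: peval_pCons mult_add_left mult_scale_left mult_assoc)
qed simp

lemma peval_power: "peval a (q ^ k) = mpow (peval a q) k"
  by (induction k) (auto simp: peval_mult)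

lemma peval_diff: "peval a (q1 - q2) = peval a q1 - peval a q2"
  using peval_add[of a "q1 - q2" q2] by (simp add: eq_diff_eq)

lemma peval_sum: "peval a (\<Sum>i\<in>A. q i) = (\<Sum>i\<in>A. peval a (q i))"
  by (induction A rule: infinite_finite_induct) (auto simp: peval_add)

lemma peval_monom: "peval a (monom c k) = s c (mpow a k)"
  by (simp add: monom_altdef peval_smult peval_power)

lemma ex_annihilating_poly: "\<exists>P. P \<noteq> 0 \<and> peval a P = 0"
proof (cases "inj_on (mpow a) {..dim (UNIV :: 'q set)}")
  case False
  then obtain i j where ij: "i \<noteq> j" "mpow a i = mpow a j"
    by (auto simp: inj_on_def)
  define P where "P = monom (1::complex) i - monom 1 j"
  have "coeff P i = 1" using ij by (simp add: P_def)
  then have "P \<noteq> 0" by auto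
  moreover have "peval a P = 0" using ij by (simp add: P_def peval_diff peval_monom)
  ultimately show ?thesis by blast
next
  case True
  define d where "d = dim (UNIV :: 'q set)"
  define S where "S = mpow a ` {..d}"
  have "card S = Suc d" using True by (simp add: S_def d_def card_image)
  then have "dependent S" using card_le_dim d_def by fastforce
  then obtain w where w: "\<exists>v\<in>S. w v \<noteq> 0" "(\<Sum>v\<in>S. s (w v) v) = 0"
    using dependent_finite[of S] by (auto simp: S_def)
  define P where "P = (\<Sum>i\<le>d. monom (w (mpow a i)) i)"
  have "peval a P = (\<Sum>i\<le>d. s (w (mpow a i)) (mpow a i))"
    by (simp add: P_def peval_sum peval_monom)
  also have "\<dots> = (\<Sum>v\<in>S. s (w v) v)"
    unfolding S_def using True by (simp add: d_def sum.reindex)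
  finally have "peval a P = 0" using w by simp
  moreover obtain i where i: "i \<le> d" "w (mpow a i) \<noteq> 0" using w S_def by auto
  then have "coeff P i \<noteq> 0" by (simp add: P_def coeff_sum)
  ultimately show ?thesis by (metis coeff_0)
qed

text \<open>Without nilpotents, the product of the linear factors of an annihilating polynomial
  (one factor per root) still annihilates, because a power of it is a multiple of that polynomial.\<close>

lemma ex_finite_spectrum:
  "\<exists>R. finite R \<and> (\<forall>g. (\<forall>x\<in>R. poly g x = 0) \<longrightarrow> peval a g = 0)"
proof -
  obtain P where P: "P \<noteq> 0" "peval a P = 0" using ex_annihilating_poly by blast
  define R where "R = {z. poly P z = 0}"
  have fR: "finite R" using P by (simp add: R_def poly_roots_finite)
  define q where "q = (\<Prod>z\<in>R. [:-z, 1:])"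
  define L where "L = degree P"
  have "(\<Prod>z\<in>R. [:-z, 1:] ^ order z P) dvd (\<Prod>z\<in>R. [:-z, 1:] ^ L)"
    by (intro prod_dvd_prod le_imp_power_dvd) (use P in \<open>simp add: L_def order_degree\<close>)
  also have "\<dots> = q ^ L" by (simp add: q_def prod_power_distrib)
  finally have "smult (lead_coeff P) (\<Prod>z\<in>R. [:-z, 1:] ^ order z P) dvd q ^ L"
    using P by (simp add: smult_dvd_iff)
  then have "P dvd q ^ L" using complex_poly_decompose[of P] by (simp add: R_def)
  then obtain r where "q ^ L = P * r" by (auto simp: dvd_def)
  then have "mpow (peval a q) L = 0" using P by (metis peval_power peval_mult mult_zero_left)
  then have q0: "peval a q = 0" by (rule mpow_eq_0_imp_eq_0)
  have "peval a g = 0" if vanish: "\<forall>x\<in>R. poly g x = 0" for g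
  proof -
    obtain r where "g = q * r" using prod_linear_factors_dvd[OF fR vanish] by (auto simp: q_def dvd_def)
    then show ?thesis using q0 by (simp add: peval_mult)
  qed
  then show ?thesis using fR by blast
qed

text \<open>The F l are the spectral projections of b: the Lagrange basis of a finite spectrum of b,
  evaluated at b.\<close>

lemma ex_spectral_decomposition:
  obtains R F where "finite R" "(\<Sum>l\<in>R. F l) = u"
    "\<And>l m. l \<in> R \<Longrightarrow> m \<in> R \<Longrightarrow> l \<noteq> m \<Longrightarrow> p (F l) (F m) = 0"
    "\<And>l. l \<in> R \<Longrightarrow> p (F l) (F l) = F l"
    "b = (\<Sum>l\<in>R. s l (F l))"
proof -
  obtain R where fR: "finite R" and vanish: "\<And>g. \<forall>x\<in>R. poly g x = 0 \<Longrightarrow> peval b g = 0"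
    using ex_finite_spectrum[of b] by blast
  define F where "F l = peval b (lagrange_poly R l)" for l
  have "peval b ((\<Sum>l\<in>R. lagrange_poly R l) - 1) = 0"
    using fR by (intro vanish) (auto simp: poly_sum poly_lagrange_poly if_distrib sum.delta cong: if_cong)
  then have "(\<Sum>l\<in>R. F l) = u" by (simp add: peval_diff peval_sum F_def)
  moreover have "p (F l) (F m) = 0" if "l \<in> R" "m \<in> R" "l \<noteq> m" for l m
  proof -
    have "peval b (lagrange_poly R l * lagrange_poly R m) = 0"
      using fR that by (intro vanish) (auto simp: poly_lagrange_poly)
    then show ?thesis by (simp add: peval_mult F_def)
  qed
  moreover have "p (F l) (F l) = F l" if "l \<in> R" for l
  proof -
    have "peval b (lagrange_poly R l * lagrange_poly R l - lagrange_poly R l) = 0"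
      using fR that by (intro vanish) (auto simp: poly_lagrange_poly)
    then show ?thesis by (simp add: peval_mult peval_diff F_def)
  qed
  moreover have "peval b ([:0, 1:] - (\<Sum>l\<in>R. smult l (lagrange_poly R l))) = 0"
    using fR by (intro vanish) (auto simp: poly_sum poly_lagrange_poly if_distrib sum.delta cong: if_cong)
  then have "b = (\<Sum>l\<in>R. s l (F l))" by (simp add: peval_diff peval_sum peval_smult F_def)
  ultimately show thesis using fR that by blast
qed

definition orthogonal_idempotents :: "'q set \<Rightarrow> bool" where
  "orthogonal_idempotents S \<longleftrightarrow> finite S \<and> (\<forall>e\<in>S. e \<noteq> 0 \<and> p e e = e) \<and>
     (\<forall>e\<in>S. \<forall>e'\<in>S. e \<noteq> e' \<longrightarrow> p e e' = 0)"

definition idempotent_partition :: "'q set \<Rightarrow> bool" where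
  "idempotent_partition S \<longleftrightarrow> orthogonal_idempotents S \<and> (\<Sum>e\<in>S. e) = u"

lemma orthogonal_idempotents_mult_sum:
  assumes "orthogonal_idempotents S" "v \<in> S"
  shows "p v (\<Sum>x\<in>S. s (w x) x) = s (w v) v"
proof -
  have "p v (\<Sum>x\<in>S. s (w x) x) = (\<Sum>x\<in>S. s (w x) (p v x))"
    by (simp add: mult_sum_right mult_scale_right)
  also have "\<dots> = s (w v) (p v v) + (\<Sum>x\<in>S - {v}. s (w x) (p v x))"
    using assms by (simp add: orthogonal_idempotents_def sum.remove)
  also have "(\<Sum>x\<in>S - {v}. s (w x) (p v x)) = 0"
    using assms by (intro sum.neutral) (auto simp: orthogonal_idempotents_def)
  finally show ?thesis using assms by (simp add: orthogonal_idempotents_def)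
qed

lemma orthogonal_idempotents_independent:
  assumes "orthogonal_idempotents S" shows "independent S"
proof
  assume "dependent S"
  then obtain w v where w: "v \<in> S" "w v \<noteq> 0" "(\<Sum>x\<in>S. s (w x) x) = 0"
    using dependent_finite[of S] assms by (auto simp: orthogonal_idempotents_def)
  then have "s (w v) v = 0" using orthogonal_idempotents_mult_sum[OF assms w(1), of w] by simp
  then show False using w assms by (auto simp: orthogonal_idempotents_def)
qed

text \<open>The nonzero products of e with the spectral projections of e a split e, and there are
  at least two of them since e a is not a multiple of e.\<close>

lemma ex_split_orthogonal_idempotents:
  assumes e: "e \<noteq> 0" "p e e = e" and not_scalar: "\<nexists>c. p e a = s c e"
  obtains T where "orthogonal_idempotents T" "(\<Sum>x\<in>T. x) = e" "2 \<le> card T"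
proof -
  define b where "b = p e a"
  obtain R F where fR: "finite R" and F1: "(\<Sum>l\<in>R. F l) = u"
    and F2: "\<And>l m. l \<in> R \<Longrightarrow> m \<in> R \<Longrightarrow> l \<noteq> m \<Longrightarrow> p (F l) (F m) = 0"
    and F3: "\<And>l. l \<in> R \<Longrightarrow> p (F l) (F l) = F l" and F4: "b = (\<Sum>l\<in>R. s l (F l))"
    using ex_spectral_decomposition[of b] by blast
  define g where "g l = p e (F l)" for l
  define U where "U = {l\<in>R. g l \<noteq> 0}"
  have fU: "finite U" using fR by (simp add: U_def)
  have g_mult: "p (g l) (g m) = p e (p (F l) (F m))" for l m
    using e(2) by (metis g_def mult_assoc mult_left_commute)
  have g_orth: "p (g l) (g m) = 0" if "l \<in> R" "m \<in> R" "l \<noteq> m" for l m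
    using F2[OF that] g_mult by simp
  have g_idem: "p (g l) (g l) = g l" if "l \<in> R" for l
    using F3[OF that] g_mult by (simp add: g_def)
  have drop_zeros: "(\<Sum>l\<in>U. g l) = (\<Sum>l\<in>R. g l)" "(\<Sum>l\<in>U. s l (g l)) = (\<Sum>l\<in>R. s l (g l))"
    using fR by (auto intro!: sum.mono_neutral_left simp: U_def)
  have sum_g: "(\<Sum>l\<in>U. g l) = e"
    using F1 drop_zeros(1) by (simp add: g_def mult_sum_right[symmetric])
  have "p e b = b" by (simp add: b_def mult_assoc[symmetric] e)
  then have "b = (\<Sum>l\<in>R. s l (g l))" using F4 by (simp add: g_def mult_sum_right mult_scale_right)
  then have sum_lg: "b = (\<Sum>l\<in>U. s l (g l))" using drop_zeros(2) by simp
  have inj: "inj_on g U"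
  proof
    fix l m assume lm: "l \<in> U" "m \<in> U" "g l = g m"
    show "l = m" using g_orth[of l m] g_idem[of l] lm by (auto simp: U_def)
  qed
  show thesis
  proof
    show "orthogonal_idempotents (g ` U)"
      using fU g_idem g_orth by (auto simp: orthogonal_idempotents_def U_def)
    show "(\<Sum>x\<in>g ` U. x) = e" using inj sum_g by (simp add: sum.reindex)
    show "2 \<le> card (g ` U)"
    proof (rule ccontr)
      assume "\<not> 2 \<le> card (g ` U)"
      then have "card U < 2" using inj by (simp add: card_image)
      then have "card U = 0 \<or> card U = 1" by linarith
      then show False
      proof
        assume "card U = 0"
        then show False using fU sum_g e by simp
      next
        assume "card U = 1"
        then obtain l where "U = {l}" by (meson card_1_singletonE)
        then show False using sum_g sum_lg not_scalar b_def by auto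
      qed
    qed
  qed
qed

lemma idempotent_partition_replace:
  assumes S: "idempotent_partition S" and e: "e \<in> S"
    and T: "orthogonal_idempotents T" "(\<Sum>x\<in>T. x) = e"
  shows "idempotent_partition (S - {e} \<union> T)" "card (S - {e} \<union> T) = card S - 1 + card T"
proof -
  have fS: "finite S" and fT: "finite T"
    using S T by (auto simp: idempotent_partition_def orthogonal_idempotents_def)
  have below_e: "p x e = x" if "x \<in> T" for x
    using orthogonal_idempotents_mult_sum[OF T(1) that, of "\<lambda>_. 1"] T(2) by simp
  have orth_S: "p y x = 0" if "y \<in> S - {e}" "x \<in> T" for x y
  proof -
    have "p y e = 0" using S e that by (auto simp: idempotent_partition_def orthogonal_idempotents_def)
    then show ?thesis using below_e[OF that(2)] by (metis mult_assoc mult_commute mult_zero_left)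
  qed
  have orth_T: "p x y = 0" if "x \<in> T" "y \<in> S - {e}" for x y
    using orth_S[OF that(2,1)] mult_commute by metis
  have disj: "(S - {e}) \<inter> T = {}"
    using orth_S T(1) by (fastforce simp: orthogonal_idempotents_def)
  have "orthogonal_idempotents (S - {e} \<union> T)"
    unfolding orthogonal_idempotents_def
  proof (intro conjI ballI impI)
    show "finite (S - {e} \<union> T)" using fS fT by simp
  next
    fix x assume "x \<in> S - {e} \<union> T"
    then show "x \<noteq> 0" "p x x = x"
      using S T(1) by (auto simp: idempotent_partition_def orthogonal_idempotents_def)
  next
    fix x y assume "x \<in> S - {e} \<union> T" "y \<in> S - {e} \<union> T" "x \<noteq> y"
    then show "p x y = 0"
      using S T(1) orth_S orth_T by (auto simp: idempotent_partition_def orthogonal_idempotents_def)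
  qed
  moreover have "(\<Sum>x\<in>S - {e} \<union> T. x) = u"
    using S e T(2) fS fT disj
    by (simp add: sum.union_disjoint sum.remove idempotent_partition_def add.commute)
  ultimately show "idempotent_partition (S - {e} \<union> T)" by (simp add: idempotent_partition_def)
  show "card (S - {e} \<union> T) = card S - 1 + card T"
    using fS fT disj e by (simp add: card_Un_disjoint)
qed

lemma ex_maximal_idempotent_partition:
  "\<exists>S. idempotent_partition S \<and> (\<forall>S'. idempotent_partition S' \<longrightarrow> card S' \<le> card S)"
proof -
  define K where "K = card ` {S. idempotent_partition S}"
  have "idempotent_partition (if u = 0 then {} else {u})"
    by (auto simp: idempotent_partition_def orthogonal_idempotents_def)
  then have ne: "K \<noteq> {}" by (auto simp: K_def)
  have "K \<subseteq> {..dim (UNIV :: 'q set)}"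
    using orthogonal_idempotents_independent card_le_dim by (auto simp: K_def idempotent_partition_def)
  then have fK: "finite K" by (rule finite_subset) simp
  obtain S where "idempotent_partition S" "card S = Max K"
    using Max_in[OF fK ne] by (auto simp: K_def)
  then show ?thesis using fK by (auto simp: K_def intro!: Max_ge)
qed

text \<open>An idempotent partition of maximal size admits no such splitting, so every element acts
  on each of its members as a scalar.\<close>

lemma ex_diagonalizing_partition:
  "\<exists>S. idempotent_partition S \<and> (\<forall>e\<in>S. \<forall>a. \<exists>c. p e a = s c e)"
proof -
  obtain S where S: "idempotent_partition S" "\<forall>S'. idempotent_partition S' \<longrightarrow> card S' \<le> card S"
    using ex_maximal_idempotent_partition by blast
  have "\<exists>c. p e a = s c e" if e: "e \<in> S" for e a
  proof (rule ccontr)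
    assume "\<nexists>c. p e a = s c e"
    moreover have "e \<noteq> 0" "p e e = e"
      using S e by (auto simp: idempotent_partition_def orthogonal_idempotents_def)
    ultimately obtain T where T: "orthogonal_idempotents T" "(\<Sum>x\<in>T. x) = e" "2 \<le> card T"
      using ex_split_orthogonal_idempotents by blast
    have "card S > 0"
      using S e by (auto simp: idempotent_partition_def orthogonal_idempotents_def card_gt_0_iff)
    then show False using idempotent_partition_replace[OF S(1) e T(1,2)] S(2) T(3) by force
  qed
  then show ?thesis using S by blast
qed

abbreviation minimal_idempotents :: "'q set" where
  "minimal_idempotents \<equiv> {e. min_idem p e}"

lemma diagonalizing_partition_eq_minimal_idempotents:
  assumes S: "idempotent_partition S" "\<forall>e\<in>S. \<forall>a. \<exists>c. p e a = s c e"
  shows "S = minimal_idempotents"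
proof
  show SM: "S \<subseteq> minimal_idempotents"
  proof
    fix e assume e: "e \<in> S"
    have ee: "e \<noteq> 0" "p e e = e"
      using S e by (auto simp: idempotent_partition_def orthogonal_idempotents_def)
    have "h = 0 \<or> h = e" if h: "p h h = h" "p h e = h" for h
    proof -
      obtain c where "p e h = s c e" using S e by blast
      then have hc: "h = s c e" using h(2) mult_commute by metis
      then have "s c e = s (c * c) e" using h(1) ee by (simp add: mult_scale_left mult_scale_right)
      then have "c * (c - 1) = 0" using ee by (simp add: right_diff_distrib)
      then show ?thesis using hc by auto
    qed
    then show "e \<in> minimal_idempotents" using ee by (simp add: min_idem_def)
  qed
  show "minimal_idempotents \<subseteq> S"
  proof
    fix m assume "m \<in> minimal_idempotents"
    then have m: "m \<noteq> 0" "p m m = m" "\<And>h. p h h = h \<Longrightarrow> p h m = h \<Longrightarrow> h = 0 \<or> h = m"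
      by (auto simp: min_idem_def)
    have "m = (\<Sum>e\<in>S. p e m)"
      using S by (simp add: idempotent_partition_def mult_sum_left[symmetric])
    then obtain e where e: "e \<in> S" "p e m \<noteq> 0" using m(1) by (metis sum.neutral)
    then have ee: "p e e = e" "\<And>h. p h h = h \<Longrightarrow> p h e = h \<Longrightarrow> h = 0 \<or> h = e"
      using SM by (auto simp: min_idem_def)
    define h where "h = p e m"
    have hh: "p h h = h" unfolding h_def using m(2) ee(1) by (metis mult_assoc mult_left_commute)
    have "p h m = h" "p h e = h"
      unfolding h_def using m(2) ee(1) by (metis mult_assoc mult_commute)+
    then have "h = m" "h = e" using m(3)[OF hh] ee(2)[OF hh] e(2) h_def by auto
    then show "m \<in> S" using e by simp
  qed
qed

lemma idempotent_partition_minimal_idempotents: "idempotent_partition minimal_idempotents"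
  and mult_minimal_idempotent: "e \<in> minimal_idempotents \<Longrightarrow> \<exists>c. p e a = s c e"
  using ex_diagonalizing_partition diagonalizing_partition_eq_minimal_idempotents by metis+

lemma finite_minimal_idempotents: "finite minimal_idempotents"
  and minimal_idempotent_nonzero: "e \<in> minimal_idempotents \<Longrightarrow> e \<noteq> 0"
  and minimal_idempotent_idem: "e \<in> minimal_idempotents \<Longrightarrow> p e e = e"
  and minimal_idempotents_orthogonal:
    "e \<in> minimal_idempotents \<Longrightarrow> e' \<in> minimal_idempotents \<Longrightarrow> e \<noteq> e' \<Longrightarrow> p e e' = 0"
  and sum_minimal_idempotents: "(\<Sum>e\<in>minimal_idempotents. e) = u"
  using idempotent_partition_minimal_idempotents
  by (auto simp: idempotent_partition_def orthogonal_idempotents_def)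

lemma card_minimal_idempotents: "card minimal_idempotents = dim (UNIV :: 'q set)"
proof -
  have "a \<in> span minimal_idempotents" for a
  proof -
    have "a = (\<Sum>e\<in>minimal_idempotents. p e a)"
      by (simp add: mult_sum_left[symmetric] sum_minimal_idempotents)
    also have "\<dots> \<in> span minimal_idempotents"
      using mult_minimal_idempotent by (intro span_sum) (metis span_base span_scale)
    finally show ?thesis .
  qed
  then show ?thesis
    using orthogonal_idempotents_independent idempotent_partition_minimal_idempotents
    by (intro basis_card_eq_dim) (auto simp: idempotent_partition_def)
qed

end

context conj_automorphism
begin

lemma aut_minimal_idempotent:
  assumes "e \<in> minimal_idempotents" shows "g e \<in> minimal_idempotents"
proof -
  have e: "e \<noteq> 0" "p e e = e" "\<And>h. p h h = h \<Longrightarrow> p h e = h \<Longrightarrow> h = 0 \<or> h = e"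
    using assms by (auto simp: min_idem_def)
  have "h = 0 \<or> h = g e" if "p h h = h" "p h (g e) = h" for h
  proof -
    have "p (g h) (g h) = g h" "p (g h) e = g h" using that by (metis aut_mult aut_involutive)+
    then show ?thesis using e(3) by (metis aut_involutive aut_zero)
  qed
  then show ?thesis using e(1,2) by (simp add: min_idem_def aut_eq_0_iff flip: aut_mult)
qed

end

context positive_star_algebra
begin

text \<open>f maps a minimal idempotent e to a minimal idempotent, which must be e itself:
  otherwise the two would be orthogonal and t(e f(e)) = 0.\<close>

lemma star_minimal_idempotent:
  assumes "e \<in> minimal_idempotents" shows "f e = e"
proof (rule ccontr)
  assume "f e \<noteq> e"
  then have "p e (f e) = 0"
    using minimal_idempotents_orthogonal[OF assms star.aut_minimal_idempotent[OF assms]] by simp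
  then show False using pos minimal_idempotent_nonzero[OF assms] by fastforce
qed

lemma trace_minimal_idempotent:
  assumes "e \<in> minimal_idempotents" shows "Im (t e) = 0" "Re (t e) > 0"
proof -
  have "t e = t (p e (f e))"
    using assms star_minimal_idempotent minimal_idempotent_idem by simp
  then show "Im (t e) = 0" "Re (t e) > 0" using pos minimal_idempotent_nonzero[OF assms] by auto
qed

lemma trace_minimal_idempotent_nonzero: "e \<in> minimal_idempotents \<Longrightarrow> t e \<noteq> 0"
  using trace_minimal_idempotent by fastforce

lemma cnj_trace_minimal_idempotent: "e \<in> minimal_idempotents \<Longrightarrow> cnj (t e) = t e"
  using trace_minimal_idempotent by (simp add: complex_eq_iff)

definition coord :: "'q \<Rightarrow> 'q \<Rightarrow> complex" where
  "coord e a = t (p e a) / t e"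

lemma mult_minimal_idempotent_coord:
  assumes "e \<in> minimal_idempotents" shows "p e a = s (coord e a) e"
proof -
  obtain c where c: "p e a = s c e" using mult_minimal_idempotent assms by blast
  then have "coord e a = c" using trace_minimal_idempotent_nonzero[OF assms]
    by (simp add: coord_def trace_scale)
  then show ?thesis using c by simp
qed

lemma coord_unique:
  assumes "e \<in> minimal_idempotents" "p e a = s c e" shows "coord e a = c"
  using mult_minimal_idempotent_coord[OF assms(1), of a] assms minimal_idempotent_nonzero[OF assms(1)]
  by simp

lemma coord_linear: "coord e (s c a + b) = c * coord e a + coord e b"
  by (simp add: coord_def mult_add_right mult_scale_right trace_add trace_scale add_divide_distrib)

lemma coord_zero [simp]: "coord e 0 = 0"
  by (simp add: coord_def)

lemma coord_scale: "coord e (s c a) = c * coord e a"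
  using coord_linear[of e c a 0] by simp

lemma coord_add: "coord e (a + b) = coord e a + coord e b"
  using coord_linear[of e 1 a b] by simp

lemma coord_sum: "coord e (\<Sum>i\<in>A. h i) = (\<Sum>i\<in>A. coord e (h i))"
  by (induction A rule: infinite_finite_induct) (auto simp: coord_add)

lemma coord_mult:
  assumes "e \<in> minimal_idempotents" shows "coord e (p a b) = coord e a * coord e b"
proof -
  have "p e (p a b) = p (p e a) (p e b)"
    using minimal_idempotent_idem[OF assms] by (metis mult_assoc mult_left_commute)
  also have "\<dots> = s (coord e a * coord e b) e"
    using mult_minimal_idempotent_coord[OF assms] minimal_idempotent_idem[OF assms]
    by (simp add: mult_scale_left mult_scale_right)
  finally show ?thesis using coord_unique[OF assms] by blast
qed

lemma coord_one: "e \<in> minimal_idempotents \<Longrightarrow> coord e u = 1"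
  using trace_minimal_idempotent_nonzero by (simp add: coord_def)

lemma coord_minimal_idempotent:
  "e \<in> minimal_idempotents \<Longrightarrow> e' \<in> minimal_idempotents \<Longrightarrow> coord e e' = (if e = e' then 1 else 0)"
  using trace_minimal_idempotent_nonzero minimal_idempotent_idem minimal_idempotents_orthogonal
  by (simp add: coord_def)

lemma coord_star:
  assumes "e \<in> minimal_idempotents" shows "coord e (f a) = cnj (coord e a)"
proof -
  have "p e (f a) = f (p e a)" using star_minimal_idempotent[OF assms] by (metis star.aut_mult)
  also have "\<dots> = s (cnj (coord e a)) e"
    using mult_minimal_idempotent_coord[OF assms] star_minimal_idempotent[OF assms]
    by (simp add: star.aut_scale)
  finally show ?thesis using coord_unique[OF assms] by blast
qed

lemma coord_idempotent:
  assumes "e \<in> minimal_idempotents" "p a a = a" shows "coord e a \<in> {0, 1}"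
proof -
  have "coord e a * (coord e a - 1) = 0"
    using coord_mult[OF assms(1), of a a] assms(2) by (simp add: right_diff_distrib)
  then show ?thesis by auto
qed

lemma coord_eq_trace_star:
  "e \<in> minimal_idempotents \<Longrightarrow> coord e a = t (p a (f e)) / t e"
  using star_minimal_idempotent by (simp add: coord_def mult_commute)

lemma minimal_idempotent_expansion: "a = (\<Sum>e\<in>minimal_idempotents. s (coord e a) e)"
proof -
  have "a = (\<Sum>e\<in>minimal_idempotents. p e a)"
    by (simp add: mult_sum_left[symmetric] sum_minimal_idempotents)
  then show ?thesis using mult_minimal_idempotent_coord by (metis (no_types, lifting) sum.cong)
qed

context
  fixes E :: "nat \<Rightarrow> 'q" and d :: nat
  assumes E: "bij_betw E {..<d} minimal_idempotents"
begin

lemma enum_minimal_idempotent: "i < d \<Longrightarrow> E i \<in> minimal_idempotents"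
  using E by (auto simp: bij_betw_def)

lemma enum_eq_iff: "i < d \<Longrightarrow> j < d \<Longrightarrow> E i = E j \<longleftrightarrow> i = j"
  using E by (auto simp: bij_betw_def inj_on_def)

lemma sum_minimal_idempotents_enum:
  "(\<Sum>e\<in>minimal_idempotents. h e) = (\<Sum>i<d. h (E i))"
  using sum.reindex_bij_betw[OF E, of h] by simp

lemma expansion_enum: "a = (\<Sum>i<d. s (coord (E i) a) (E i))"
  using minimal_idempotent_expansion[of a] sum_minimal_idempotents_enum[of "\<lambda>e. s (coord e a) e"]
  by simp

lemma trace_expansion_enum: "t a = (\<Sum>i<d. coord (E i) a * t (E i))"
  by (subst expansion_enum) (simp add: trace_sum trace_scale)

lemma coord_sum_enum:
  assumes "j < d" shows "coord (E j) (\<Sum>i<d. s (h i) (E i)) = h j"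
proof -
  have "coord (E j) (\<Sum>i<d. s (h i) (E i)) = (\<Sum>i<d. h i * coord (E j) (E i))"
    by (simp add: coord_sum coord_scale)
  also have "\<dots> = (\<Sum>i<d. if i = j then h i else 0)"
    using enum_minimal_idempotent enum_eq_iff assms
    by (intro sum.cong) (auto simp: coord_minimal_idempotent)
  finally show ?thesis using assms by simp
qed

lemma eq_if_coords_eq: "(\<And>i. i < d \<Longrightarrow> coord (E i) a = coord (E i) b) \<Longrightarrow> a = b"
  by (metis (no_types, lifting) expansion_enum lessThan_iff sum.cong)

lemma trace_mult_star_expansion:
  "t (p a (f b)) =
     (\<Sum>i<d. inverse (t (p (E i) (f (E i)))) * t (p a (f (E i))) * cnj (t (p b (f (E i)))))"
proof -
  have "t (p a (f b)) = (\<Sum>i<d. coord (E i) a * cnj (coord (E i) b) * t (E i))"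
    using trace_expansion_enum[of "p a (f b)"] enum_minimal_idempotent
    by (simp add: coord_mult coord_star)
  also have "\<dots> = (\<Sum>i<d. inverse (t (p (E i) (f (E i)))) * t (p a (f (E i))) * cnj (t (p b (f (E i)))))"
  proof (intro sum.cong refl)
    fix i assume "i \<in> {..<d}"
    then have e: "E i \<in> minimal_idempotents" using enum_minimal_idempotent by simp
    have "cnj (t (E i)) = t (E i)" "t (E i) \<noteq> 0"
      using cnj_trace_minimal_idempotent[OF e] trace_minimal_idempotent_nonzero[OF e] .
    then show "coord (E i) a * cnj (coord (E i) b) * t (E i) =
        inverse (t (p (E i) (f (E i)))) * t (p a (f (E i))) * cnj (t (p b (f (E i))))"
      by (simp add: coord_eq_trace_star[OF e] star_minimal_idempotent[OF e]
          minimal_idempotent_idem[OF e] field_simps)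
  qed
  finally show ?thesis .
qed

lemma ex_Cd_iso:
  "\<exists>\<phi>. (\<forall>c a b i. \<phi> (s c a + b) i = c * \<phi> a i + \<phi> b i) \<and>
     bij_betw \<phi> UNIV {h :: nat \<Rightarrow> complex. \<forall>i\<ge>d. h i = 0} \<and>
     (\<forall>a b i. \<phi> (p a b) i = \<phi> a i * \<phi> b i) \<and> (\<forall>i<d. \<phi> u i = 1)"
proof (intro exI conjI)
  define \<phi> where "\<phi> a i = (if i < d then coord (E i) a else 0)" for a i
  show "bij_betw \<phi> UNIV {h. \<forall>i\<ge>d. h i = 0}"
    unfolding bij_betw_def
  proof
    show "inj \<phi>"
      by (rule injI, rule eq_if_coords_eq) (metis \<phi>_def)
    have "h = \<phi> (\<Sum>i<d. s (h i) (E i))" if "\<forall>i\<ge>d. h i = 0" for h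
      using that coord_sum_enum by (auto simp: \<phi>_def fun_eq_iff)
    then have "{h. \<forall>i\<ge>d. h i = 0} \<subseteq> range \<phi>" by blast
    moreover have "range \<phi> \<subseteq> {h. \<forall>i\<ge>d. h i = 0}" by (auto simp: \<phi>_def)
    ultimately show "range \<phi> = {h. \<forall>i\<ge>d. h i = 0}" by blast
  qed
  show "\<forall>c a b i. \<phi> (s c a + b) i = c * \<phi> a i + \<phi> b i" by (simp add: \<phi>_def coord_linear)
  show "\<forall>a b i. \<phi> (p a b) i = \<phi> a i * \<phi> b i"
    using enum_minimal_idempotent by (simp add: \<phi>_def coord_mult)
  show "\<forall>i<d. \<phi> u i = 1" using enum_minimal_idempotent by (simp add: \<phi>_def coord_one)
qed

end

lemma ex_enum_minimal_idempotents: "\<exists>E. bij_betw E {..<dim (UNIV :: 'q set)} minimal_idempotents"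
  using ex_bij_betw_nat_finite[OF finite_minimal_idempotents] card_minimal_idempotents
  by (auto simp: atLeast0LessThan)

end

context conj_automorphism
begin

lemma coord_aut:
  assumes "e \<in> minimal_idempotents" shows "coord (g e) (g a) = cnj (coord e a)"
proof -
  have "p (g e) (g a) = s (cnj (coord e a)) (g e)"
    using mult_minimal_idempotent_coord[OF assms] by (simp flip: aut_mult add: aut_scale)
  then show ?thesis using coord_unique[OF aut_minimal_idempotent[OF assms]] by blast
qed

end

section \<open>Character algebras\<close>

locale character_algebra =
  fixes Q :: "'q::ab_group_add chalg" and n :: real
  assumes char_alg: "char_alg Q n"
begin

lemma tr_dot_pi: "tr_dot Q (piQ Q a) = cnj (tr_dot Q a)"
  and tr_dot_mu: "tr_dot Q (muQ Q a) = cnj (tr_dot Q a)"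
  and tr_cross_pi: "tr_cross Q (piQ Q a) = cnj (tr_cross Q a)"
  and tr_cross_mu: "tr_cross Q (muQ Q a) = cnj (tr_cross Q a)"
  and ip_self_pos: "a \<noteq> 0 \<Longrightarrow> Im (ip Q a a) = 0 \<and> Re (ip Q a a) > 0"
  and one_cross_idem: "dotp Q (one_cross Q) (one_cross Q) = one_cross Q"
  and n_pos: "n > 0"
  and cross_one_dot: "crossp Q (one_dot Q) (one_dot Q) = scl Q (complex_of_real n) (one_dot Q)"
  and pi_aut: "antilin_inv_aut (scl Q) (dotp Q) (crossp Q) (piQ Q)"
  and mu_aut: "antilin_inv_aut (scl Q) (dotp Q) (crossp Q) (muQ Q)"
  using char_alg by (simp_all add: char_alg_def)

lemma ip_cross: "ip Q a b = tr_cross Q (crossp Q a (muQ Q b))"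
  using char_alg by (simp add: char_alg_def ip_def)

sublocale dot: positive_star_algebra "scl Q" "dotp Q" "one_dot Q" "tr_dot Q" "piQ Q"
  unfolding positive_star_algebra_def
  using char_alg pi_aut ip_self_pos by (simp add: char_alg_def antilin_inv_aut_def ip_def)

sublocale cross: positive_star_algebra "scl Q" "crossp Q" "one_cross Q" "tr_cross Q" "muQ Q"
  unfolding positive_star_algebra_def
  using char_alg mu_aut ip_self_pos by (simp add: char_alg_def antilin_inv_aut_def ip_cross)

sublocale dot_mu: conj_automorphism "scl Q" "dotp Q" "one_dot Q" "tr_dot Q" "piQ Q" "muQ Q"
  using mu_aut by unfold_locales (simp add: antilin_inv_aut_def)

sublocale cross_pi: conj_automorphism "scl Q" "crossp Q" "one_cross Q" "tr_cross Q" "muQ Q" "piQ Q"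
  using pi_aut by unfold_locales (simp add: antilin_inv_aut_def)

lemma cnj_ip: "cnj (ip Q a b) = ip Q b a"
  by (simp add: ip_def tr_dot_pi[symmetric] dot.star.aut_mult dot.mult_commute)

lemma ip_scale_left: "ip Q (scl Q c a) b = c * ip Q a b"
  by (simp add: ip_def dot.mult_scale_left dot.trace_scale)

lemma ip_scale_right: "ip Q a (scl Q c b) = cnj c * ip Q a b"
  by (metis cnj_ip ip_scale_left complex_cnj_mult complex_cnj_cnj)

lemma ip_sum_left: "ip Q (\<Sum>i\<in>A. h i) b = (\<Sum>i\<in>A. ip Q (h i) b)"
  by (simp add: ip_def dot.mult_sum_left dot.trace_sum)

lemma ip_sum_right: "ip Q a (\<Sum>i\<in>A. h i) = (\<Sum>i\<in>A. ip Q a (h i))"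
  by (metis (mono_tags, lifting) cnj_ip ip_sum_left cnj_sum sum.cong)

lemma ip_pi_right: "piQ Q a = a \<Longrightarrow> ip Q a (piQ Q b) = cnj (ip Q a b)"
  by (metis cnj_ip ip_def tr_dot_pi dot.star.aut_mult dot.star.aut_involutive dot.mult_commute)

lemma ip_mu_left: "muQ Q b = b \<Longrightarrow> ip Q (muQ Q a) b = cnj (ip Q a b)"
  by (metis ip_cross tr_cross_mu cross.star.aut_mult cross.star.aut_involutive)

lemma ip_one_dot: "ip Q a (one_dot Q) = tr_dot Q a"
  by (simp add: ip_def)

lemma ip_one_cross: "muQ Q b = b \<Longrightarrow> ip Q (one_cross Q) b = tr_cross Q b"
  by (simp add: ip_cross)

lemma ip_dot_idempotent: "e \<in> dot.minimal_idempotents \<Longrightarrow> ip Q e e = tr_dot Q e"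
  by (simp add: ip_def dot.star_minimal_idempotent dot.minimal_idempotent_idem)

lemma ip_cross_idempotent: "e \<in> cross.minimal_idempotents \<Longrightarrow> ip Q e e = tr_cross Q e"
  by (simp add: ip_cross cross.star_minimal_idempotent cross.minimal_idempotent_idem)

lemma dot_coord_eq_ip: "e \<in> dot.minimal_idempotents \<Longrightarrow> dot.coord e a = ip Q a e / tr_dot Q e"
  by (simp add: dot.coord_eq_trace_star ip_def)

lemma ip_dot_idempotents:
  "e \<in> dot.minimal_idempotents \<Longrightarrow> e' \<in> dot.minimal_idempotents \<Longrightarrow>
     ip Q e e' = (if e = e' then ip Q e e else 0)"
  by (simp add: ip_def dot.star_minimal_idempotent dot.minimal_idempotents_orthogonal)

lemma ip_cross_idempotents:
  "e \<in> cross.minimal_idempotents \<Longrightarrow> e' \<in> cross.minimal_idempotents \<Longrightarrow>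
     ip Q e e' = (if e = e' then ip Q e e else 0)"
  by (simp add: ip_cross cross.star_minimal_idempotent cross.minimal_idempotents_orthogonal)

text \<open>Parseval's identity for (a,b) in either basis of minimal idempotents; the orthogonality
  relations are its instances for the elements of the other basis.\<close>

lemma ip_expansion_dot:
  assumes "bij_betw E {..<d::nat} dot.minimal_idempotents"
  shows "ip Q a b = (\<Sum>i<d. inverse (ip Q (E i) (E i)) * ip Q a (E i) * cnj (ip Q b (E i)))"
  unfolding ip_def by (rule dot.trace_mult_star_expansion[OF assms])

lemma ip_expansion_cross:
  assumes "bij_betw E {..<d::nat} cross.minimal_idempotents"
  shows "ip Q a b = (\<Sum>i<d. inverse (ip Q (E i) (E i)) * ip Q a (E i) * cnj (ip Q b (E i)))"
  unfolding ip_cross by (rule cross.trace_mult_star_expansion[OF assms])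

lemma ex_dot_Cd_iso: "\<exists>\<phi>. cd_alg_iso Q (dotp Q) (one_dot Q) (cdim Q) \<phi>"
  using dot.ex_enum_minimal_idempotents dot.ex_Cd_iso by (fastforce simp: cd_alg_iso_def cdim_def)

lemma ex_cross_Cd_iso: "\<exists>\<phi>. cd_alg_iso Q (crossp Q) (one_cross Q) (cdim Q) \<phi>"
  using cross.ex_enum_minimal_idempotents cross.ex_Cd_iso by (fastforce simp: cd_alg_iso_def cdim_def)

lemma card_dot_minimal_idempotents: "card dot.minimal_idempotents = cdim Q"
  by (simp add: dot.card_minimal_idempotents cdim_def)

lemma card_cross_minimal_idempotents: "card cross.minimal_idempotents = cdim Q"
  by (simp add: cross.card_minimal_idempotents cdim_def)

abbreviation scaled_one_dot :: 'q where
  "scaled_one_dot \<equiv> scl Q (complex_of_real (1 / n)) (one_dot Q)"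

lemma cross_scaled_one_dot: "crossp Q scaled_one_dot scaled_one_dot = scaled_one_dot"
proof -
  have "complex_of_real (1 / n) * (complex_of_real (1 / n) * complex_of_real n) = complex_of_real (1 / n)"
    using n_pos by (simp flip: of_real_mult)
  then show ?thesis
    by (simp add: cross.mult_scale_left cross.mult_scale_right cross_one_dot dot.scale_scale)
qed

lemma ip_self_eq_n_ip_scaled_one_dot:
  assumes "e \<in> dot.minimal_idempotents"
  shows "ip Q e e = complex_of_real n * ip Q e scaled_one_dot"
proof -
  have "ip Q e scaled_one_dot = complex_of_real (1 / n) * tr_dot Q e"
    by (simp only: ip_scale_right ip_one_dot complex_cnj_complex_of_real)
  then show ?thesis using n_pos ip_dot_idempotent[OF assms] by simp
qed

lemma ip_self_eq_ip_one_cross: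
  "e \<in> cross.minimal_idempotents \<Longrightarrow> ip Q e e = ip Q (one_cross Q) e"
  by (simp add: ip_cross_idempotent ip_one_cross cross.star_minimal_idempotent)

end

locale indexed_character_algebra = character_algebra +
  fixes X \<Psi>
  assumes X: "bij_betw X {..<cdim Q} {e. min_idem (dotp Q) e}"
    and \<Psi>: "bij_betw \<Psi> {..<cdim Q} {e. min_idem (crossp Q) e}"
begin

lemma X_in: "i < cdim Q \<Longrightarrow> X i \<in> dot.minimal_idempotents"
  using dot.enum_minimal_idempotent[OF X] .

lemma \<Psi>_in: "j < cdim Q \<Longrightarrow> \<Psi> j \<in> cross.minimal_idempotents"
  using cross.enum_minimal_idempotent[OF \<Psi>] .

lemma pi_X: "i < cdim Q \<Longrightarrow> piQ Q (X i) = X i"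
  using X_in dot.star_minimal_idempotent by blast

lemma mu_\<Psi>: "j < cdim Q \<Longrightarrow> muQ Q (\<Psi> j) = \<Psi> j"
  using \<Psi>_in cross.star_minimal_idempotent by blast

lemma index_involutions:
  "\<exists>m p. (\<forall>i<cdim Q. m i < cdim Q \<and> m (m i) = i \<and> muQ Q (X i) = X (m i)) \<and>
         (\<forall>j<cdim Q. p j < cdim Q \<and> p (p j) = j \<and> piQ Q (\<Psi> j) = \<Psi> (p j)) \<and>
         (\<forall>i<cdim Q. ip Q (X (m i)) (X (m i)) = ip Q (X i) (X i)) \<and>
         (\<forall>j<cdim Q. ip Q (\<Psi> (p j)) (\<Psi> (p j)) = ip Q (\<Psi> j) (\<Psi> j)) \<and>
         (\<forall>i<cdim Q. \<forall>j<cdim Q. ip Q (X i) (\<Psi> (p j)) = cnj (ip Q (X i) (\<Psi> j))) \<and>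
         (\<forall>i<cdim Q. \<forall>j<cdim Q. ip Q (X (m i)) (\<Psi> j) = cnj (ip Q (X i) (\<Psi> j)))"
proof -
  obtain m where m: "\<forall>i<cdim Q. m i < cdim Q \<and> m (m i) = i \<and> muQ Q (X i) = X (m i)"
    using bij_betw_index_involution[OF X dot_mu.aut_minimal_idempotent dot_mu.aut_involutive] by blast
  obtain p where p: "\<forall>j<cdim Q. p j < cdim Q \<and> p (p j) = j \<and> piQ Q (\<Psi> j) = \<Psi> (p j)"
    using bij_betw_index_involution[OF \<Psi> cross_pi.aut_minimal_idempotent cross_pi.aut_involutive] by blast
  have "ip Q (X (m i)) (X (m i)) = ip Q (X i) (X i)" if "i < cdim Q" for i
    using m that X_in ip_dot_idempotent tr_dot_mu dot.cnj_trace_minimal_idempotent by metis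
  moreover have "ip Q (\<Psi> (p j)) (\<Psi> (p j)) = ip Q (\<Psi> j) (\<Psi> j)" if "j < cdim Q" for j
    using p that \<Psi>_in ip_cross_idempotent tr_cross_pi cross.cnj_trace_minimal_idempotent by metis
  moreover have "ip Q (X i) (\<Psi> (p j)) = cnj (ip Q (X i) (\<Psi> j))" if "i < cdim Q" "j < cdim Q" for i j
    using p that pi_X ip_pi_right by metis
  moreover have "ip Q (X (m i)) (\<Psi> j) = cnj (ip Q (X i) (\<Psi> j))" if "i < cdim Q" "j < cdim Q" for i j
    using m that mu_\<Psi> ip_mu_left by metis
  ultimately show ?thesis using m p by blast
qed

lemma ip_X_X: "i < cdim Q \<Longrightarrow> i' < cdim Q \<Longrightarrow> ip Q (X i) (X i') = (if i = i' then ip Q (X i) (X i) else 0)"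
  using X_in ip_dot_idempotents dot.enum_eq_iff[OF X] by simp

lemma ip_\<Psi>_\<Psi>:
  "j < cdim Q \<Longrightarrow> j' < cdim Q \<Longrightarrow> ip Q (\<Psi> j) (\<Psi> j') = (if j = j' then ip Q (\<Psi> j) (\<Psi> j) else 0)"
  using \<Psi>_in ip_cross_idempotents cross.enum_eq_iff[OF \<Psi>] by simp

lemma ip_X_self: "i < cdim Q \<Longrightarrow> ip Q (X i) (X i) = tr_dot Q (X i)"
  and tr_dot_X: "i < cdim Q \<Longrightarrow> Im (tr_dot Q (X i)) = 0" "i < cdim Q \<Longrightarrow> Re (tr_dot Q (X i)) > 0"
  using X_in ip_dot_idempotent dot.trace_minimal_idempotent by blast+

lemma ip_\<Psi>_self: "j < cdim Q \<Longrightarrow> ip Q (\<Psi> j) (\<Psi> j) = tr_cross Q (\<Psi> j)"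
  and tr_cross_\<Psi>: "j < cdim Q \<Longrightarrow> Im (tr_cross Q (\<Psi> j)) = 0" "j < cdim Q \<Longrightarrow> Re (tr_cross Q (\<Psi> j)) > 0"
  using \<Psi>_in ip_cross_idempotent cross.trace_minimal_idempotent by blast+

lemma orthogonality_columns:
  assumes "k < cdim Q" "l < cdim Q"
  shows "(if k = l then ip Q (\<Psi> k) (\<Psi> k) else 0) =
    (\<Sum>i<cdim Q. inverse (ip Q (X i) (X i)) * cnj (ip Q (X i) (\<Psi> k)) * ip Q (X i) (\<Psi> l))"
  using ip_\<Psi>_\<Psi>[OF assms] ip_expansion_dot[OF X, of "\<Psi> k" "\<Psi> l"] by (simp add: cnj_ip)

lemma orthogonality_rows:
  assumes "i < cdim Q" "j < cdim Q"
  shows "(if i = j then ip Q (X i) (X i) else 0) =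
    (\<Sum>s<cdim Q. inverse (ip Q (\<Psi> s) (\<Psi> s)) * ip Q (X i) (\<Psi> s) * cnj (ip Q (X j) (\<Psi> s)))"
  using ip_X_X[OF assms] ip_expansion_cross[OF \<Psi>, of "X i" "X j"] by simp

lemma unit_expansions:
  "\<exists>nn mm. (\<forall>j<cdim Q. nn j \<in> {0, 1}) \<and> (\<forall>i<cdim Q. mm i \<in> {0, 1}) \<and>
     scaled_one_dot = (\<Sum>j<cdim Q. scl Q (nn j) (\<Psi> j)) \<and>
     one_cross Q = (\<Sum>i<cdim Q. scl Q (mm i) (X i)) \<and>
     (\<forall>i<cdim Q. ip Q (X i) (X i) = complex_of_real n * (\<Sum>j<cdim Q. ip Q (X i) (\<Psi> j) * nn j)) \<and>
     (\<forall>j<cdim Q. ip Q (\<Psi> j) (\<Psi> j) = (\<Sum>i<cdim Q. ip Q (X i) (\<Psi> j) * mm i))"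
proof (intro exI conjI allI impI)
  define nn where "nn j = cross.coord (\<Psi> j) scaled_one_dot" for j
  define mm where "mm i = dot.coord (X i) (one_cross Q)" for i
  show nn01: "nn j \<in> {0, 1}" if "j < cdim Q" for j
    using cross.coord_idempotent[OF \<Psi>_in[OF that] cross_scaled_one_dot] by (simp add: nn_def)
  show "mm i \<in> {0, 1}" if "i < cdim Q" for i
    using dot.coord_idempotent[OF X_in[OF that] one_cross_idem] by (simp add: mm_def)
  show unit: "scaled_one_dot = (\<Sum>j<cdim Q. scl Q (nn j) (\<Psi> j))"
    unfolding nn_def by (rule cross.expansion_enum[OF \<Psi>])
  show one: "one_cross Q = (\<Sum>i<cdim Q. scl Q (mm i) (X i))"
    unfolding mm_def by (rule dot.expansion_enum[OF X])
  show "ip Q (X i) (X i) = complex_of_real n * (\<Sum>j<cdim Q. ip Q (X i) (\<Psi> j) * nn j)"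
    if "i < cdim Q" for i
  proof -
    have "ip Q (X i) scaled_one_dot = (\<Sum>j<cdim Q. cnj (nn j) * ip Q (X i) (\<Psi> j))"
      by (subst unit) (simp add: ip_sum_right ip_scale_right)
    also have "\<dots> = (\<Sum>j<cdim Q. ip Q (X i) (\<Psi> j) * nn j)"
      using nn01 by (intro sum.cong refl) (fastforce simp: insert_iff)
    finally show ?thesis using ip_self_eq_n_ip_scaled_one_dot[OF X_in[OF that]] by simp
  qed
  show "ip Q (\<Psi> j) (\<Psi> j) = (\<Sum>i<cdim Q. ip Q (X i) (\<Psi> j) * mm i)" if "j < cdim Q" for j
    using ip_self_eq_ip_one_cross[OF \<Psi>_in[OF that]]
    by (subst (asm) one) (simp add: ip_sum_left ip_scale_left mult.commute)
qed

lemma normalized_units: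
  assumes "scaled_one_dot = \<Psi> 0 \<and> one_cross Q = X 0"
  shows "i < cdim Q \<Longrightarrow> ip Q (X i) (X i) = complex_of_real n * ip Q (X i) (\<Psi> 0)"
    and "j < cdim Q \<Longrightarrow> ip Q (\<Psi> j) (\<Psi> j) = ip Q (X 0) (\<Psi> j)"
  using ip_self_eq_n_ip_scaled_one_dot[OF X_in] ip_self_eq_ip_one_cross[OF \<Psi>_in] assms by simp_all

end

section \<open>The character data determine the algebra\<close>

locale matching_character_data =
  A: indexed_character_algebra Q n X \<Psi> + B: indexed_character_algebra Q' n' X' \<Psi>'
  for Q :: "'q::ab_group_add chalg" and n X \<Psi> and Q' :: "'r::ab_group_add chalg" and n' X' \<Psi>' +
  assumes same_dim: "cdim Q' = cdim Q"
    and same_A: "\<forall>i<cdim Q. ip Q' (X' i) (X' i) = ip Q (X i) (X i)"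
    and same_B: "\<forall>j<cdim Q. ip Q' (\<Psi>' j) (\<Psi>' j) = ip Q (\<Psi> j) (\<Psi> j)"
    and same_C: "\<forall>i<cdim Q. \<forall>j<cdim Q. ip Q' (X' i) (\<Psi>' j) = ip Q (X i) (\<Psi> j)"
    and same_mu: "\<forall>i<cdim Q. \<forall>k<cdim Q. muQ Q (X i) = X k \<longleftrightarrow> muQ Q' (X' i) = X' k"
begin

abbreviation d where "d \<equiv> cdim Q"

lemma X': "bij_betw X' {..<d} B.dot.minimal_idempotents"
  and \<Psi>': "bij_betw \<Psi>' {..<d} B.cross.minimal_idempotents"
  using B.X B.\<Psi> same_dim by simp_all

definition \<phi> :: "'q \<Rightarrow> 'r" where
  "\<phi> a = (\<Sum>i<d. scl Q' (A.dot.coord (X i) a) (X' i))"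

lemma dot_coord_\<phi>: "i < d \<Longrightarrow> B.dot.coord (X' i) (\<phi> a) = A.dot.coord (X i) a"
  unfolding \<phi>_def by (rule B.dot.coord_sum_enum[OF X'])

lemma \<phi>_eqI: "(\<And>i. i < d \<Longrightarrow> B.dot.coord (X' i) x = A.dot.coord (X i) a) \<Longrightarrow> x = \<phi> a"
  by (rule B.dot.eq_if_coords_eq[OF X']) (simp add: dot_coord_\<phi>)

lemma dot_coord_\<Psi>':
  assumes "i < d" "j < d" shows "B.dot.coord (X' i) (\<Psi>' j) = A.dot.coord (X i) (\<Psi> j)"
proof -
  have "B.dot.coord (X' i) (\<Psi>' j) = cnj (ip Q' (X' i) (\<Psi>' j)) / ip Q' (X' i) (X' i)"
    using B.X_in assms same_dim by (simp add: B.dot_coord_eq_ip B.ip_dot_idempotent B.cnj_ip)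
  also have "\<dots> = cnj (ip Q (X i) (\<Psi> j)) / ip Q (X i) (X i)"
    using same_A same_C assms by simp
  also have "\<dots> = A.dot.coord (X i) (\<Psi> j)"
    using A.X_in assms by (simp add: A.dot_coord_eq_ip A.ip_dot_idempotent A.cnj_ip)
  finally show ?thesis .
qed

text \<open>Since C agrees, \<phi> maps the basis \<Psi> onto \<Psi>', so \<phi> is also diagonal in the cross bases.\<close>

lemma \<phi>_cross_expansion: "\<phi> a = (\<Sum>j<d. scl Q' (A.cross.coord (\<Psi> j) a) (\<Psi>' j))"
proof (rule sym, rule \<phi>_eqI)
  fix i assume i: "i < d"
  have "B.dot.coord (X' i) (\<Sum>j<d. scl Q' (A.cross.coord (\<Psi> j) a) (\<Psi>' j))
      = (\<Sum>j<d. A.cross.coord (\<Psi> j) a * A.dot.coord (X i) (\<Psi> j))"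
    using dot_coord_\<Psi>'[OF i] by (simp add: B.dot.coord_sum B.dot.coord_scale)
  also have "\<dots> = A.dot.coord (X i) (\<Sum>j<d. scl Q (A.cross.coord (\<Psi> j) a) (\<Psi> j))"
    by (simp add: A.dot.coord_sum A.dot.coord_scale)
  also have "\<dots> = A.dot.coord (X i) a" by (simp flip: A.cross.expansion_enum[OF A.\<Psi>])
  finally show "B.dot.coord (X' i) (\<Sum>j<d. scl Q' (A.cross.coord (\<Psi> j) a) (\<Psi>' j)) = A.dot.coord (X i) a" .
qed

lemma cross_coord_\<phi>: "j < d \<Longrightarrow> B.cross.coord (\<Psi>' j) (\<phi> a) = A.cross.coord (\<Psi> j) a"
  using B.cross.coord_sum_enum[OF \<Psi>'] by (simp add: \<phi>_cross_expansion)

lemma \<phi>_linear: "\<phi> (scl Q c a + b) = scl Q' c (\<phi> a) + \<phi> b"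
  by (rule sym, rule \<phi>_eqI) (simp add: dot_coord_\<phi> B.dot.coord_linear A.dot.coord_linear)

lemma bij_\<phi>: "bij \<phi>"
proof (rule bijI)
  show "inj \<phi>"
    by (rule injI, rule A.dot.eq_if_coords_eq[OF A.X]) (metis dot_coord_\<phi>)
  have "b = \<phi> (\<Sum>i<d. scl Q (B.dot.coord (X' i) b) (X i))" for b
    by (rule \<phi>_eqI) (simp add: A.dot.coord_sum_enum[OF A.X])
  then show "surj \<phi>" by (metis surj_def)
qed

lemma \<phi>_dot: "\<phi> (dotp Q a b) = dotp Q' (\<phi> a) (\<phi> b)"
  by (rule sym, rule \<phi>_eqI) (simp add: dot_coord_\<phi> A.dot.coord_mult[OF A.X_in] B.dot.coord_mult[OF B.X_in] same_dim)

lemma \<phi>_cross: "\<phi> (crossp Q a b) = crossp Q' (\<phi> a) (\<phi> b)"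
  by (rule B.cross.eq_if_coords_eq[OF \<Psi>'])
    (simp add: cross_coord_\<phi> A.cross.coord_mult[OF A.\<Psi>_in] B.cross.coord_mult[OF B.\<Psi>_in] same_dim)

lemma tr_dot_\<phi>: "tr_dot Q' (\<phi> a) = tr_dot Q a"
proof -
  have "tr_dot Q' (\<phi> a) = (\<Sum>i<d. B.dot.coord (X' i) (\<phi> a) * tr_dot Q' (X' i))"
    by (rule B.dot.trace_expansion_enum[OF X'])
  also have "\<dots> = (\<Sum>i<d. A.dot.coord (X i) a * tr_dot Q (X i))"
    using same_A A.X_in B.X_in same_dim
    by (intro sum.cong refl) (simp add: dot_coord_\<phi> flip: A.ip_dot_idempotent B.ip_dot_idempotent)
  also have "\<dots> = tr_dot Q a"
    by (rule A.dot.trace_expansion_enum[OF A.X, symmetric])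
  finally show ?thesis .
qed

lemma tr_cross_\<phi>: "tr_cross Q' (\<phi> a) = tr_cross Q a"
proof -
  have "tr_cross Q' (\<phi> a) = (\<Sum>j<d. B.cross.coord (\<Psi>' j) (\<phi> a) * tr_cross Q' (\<Psi>' j))"
    by (rule B.cross.trace_expansion_enum[OF \<Psi>'])
  also have "\<dots> = (\<Sum>j<d. A.cross.coord (\<Psi> j) a * tr_cross Q (\<Psi> j))"
    using same_B A.\<Psi>_in B.\<Psi>_in same_dim
    by (intro sum.cong refl) (simp add: cross_coord_\<phi> flip: A.ip_cross_idempotent B.ip_cross_idempotent)
  also have "\<dots> = tr_cross Q a"
    by (rule A.cross.trace_expansion_enum[OF A.\<Psi>, symmetric])
  finally show ?thesis .
qed

lemma \<phi>_pi: "\<phi> (piQ Q a) = piQ Q' (\<phi> a)"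
  by (rule sym, rule \<phi>_eqI) (simp add: dot_coord_\<phi> A.dot.coord_star[OF A.X_in] B.dot.coord_star[OF B.X_in] same_dim)

lemma \<phi>_mu: "\<phi> (muQ Q a) = muQ Q' (\<phi> a)"
proof -
  obtain m where m: "\<forall>i<d. m i < d \<and> m (m i) = i \<and> muQ Q (X i) = X (m i)"
    using bij_betw_index_involution[OF A.X A.dot_mu.aut_minimal_idempotent A.dot_mu.aut_involutive]
    by blast
  show ?thesis
  proof (rule sym, rule \<phi>_eqI)
    fix k assume k: "k < d"
    then have mk: "m k < d" "m (m k) = k" using m by auto
    have mu_Xmk: "muQ Q (X (m k)) = X k" using m mk by auto
    then have "muQ Q' (X' (m k)) = X' k" using same_mu mk(1) k by blast
    then show "B.dot.coord (X' k) (muQ Q' (\<phi> a)) = A.dot.coord (X k) (muQ Q a)"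
      using mu_Xmk A.dot_mu.coord_aut[OF A.X_in[OF mk(1)], of a] same_dim
        B.dot_mu.coord_aut[OF B.X_in, of "m k" "\<phi> a"] mk(1) dot_coord_\<phi>[OF mk(1)]
      by simp
  qed
qed

lemma chalg_iso_\<phi>: "chalg_iso Q Q' \<phi>"
  unfolding chalg_iso_def
  using \<phi>_linear bij_\<phi> \<phi>_dot \<phi>_cross tr_dot_\<phi> tr_cross_\<phi> \<phi>_pi \<phi>_mu by blast

end

text \<open>The permutation \<pi> of the cross basis need not be assumed to agree: \<pi> fixes every X i,
  so it is determined by the coordinates in the dot basis.\<close>

lemma chalg_iso_if_same_character_data:
  fixes Q :: "'q::ab_group_add chalg" and Q' :: "'r::ab_group_add chalg"
  assumes "indexed_character_algebra Q n X \<Psi>" "char_alg Q' n'"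
    and X': "bij_betw X' {..<cdim Q} {e. min_idem (dotp Q') e}"
    and \<Psi>': "bij_betw \<Psi>' {..<cdim Q} {e. min_idem (crossp Q') e}"
    and "\<forall>i<cdim Q. ip Q' (X' i) (X' i) = ip Q (X i) (X i)"
    and "\<forall>j<cdim Q. ip Q' (\<Psi>' j) (\<Psi>' j) = ip Q (\<Psi> j) (\<Psi> j)"
    and "\<forall>i<cdim Q. \<forall>j<cdim Q. ip Q' (X' i) (\<Psi>' j) = ip Q (X i) (\<Psi> j)"
    and "\<forall>i<cdim Q. \<forall>k<cdim Q. muQ Q (X i) = X k \<longleftrightarrow> muQ Q' (X' i) = X' k"
  shows "\<exists>\<phi>. chalg_iso Q Q' \<phi>"
proof -
  interpret B: character_algebra Q' n' by (rule character_algebra.intro) fact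
  have dim: "cdim Q' = cdim Q"
    using bij_betw_same_card[OF X'] B.card_dot_minimal_idempotents by simp
  interpret matching_character_data Q n X \<Psi> Q' n' X' \<Psi>'
    using assms dim by (simp add: matching_character_data_def indexed_character_algebra_def character_algebra_def
        indexed_character_algebra_axioms_def matching_character_data_axioms_def)
  show ?thesis using chalg_iso_\<phi> by blast
qed

theorem propositionP:
  fixes Q :: "'q::ab_group_add chalg" and n :: real
  assumes "char_alg Q n"
  shows
   "(\<exists>\<phi>. cd_alg_iso Q (dotp Q) (one_dot Q) (cdim Q) \<phi>) \<and>
    (\<exists>\<phi>. cd_alg_iso Q (crossp Q) (one_cross Q) (cdim Q) \<phi>) \<and>
    finite {e. min_idem (dotp Q) e} \<and> card {e. min_idem (dotp Q) e} = cdim Q \<and>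
    finite {e. min_idem (crossp Q) e} \<and> card {e. min_idem (crossp Q) e} = cdim Q \<and>
    (\<forall>X \<Psi>. bij_betw X {..<cdim Q} {e. min_idem (dotp Q) e} \<longrightarrow>
            bij_betw \<Psi> {..<cdim Q} {e. min_idem (crossp Q) e} \<longrightarrow>
       \<comment> \<open>(2)\<close>
       (\<forall>i<cdim Q. piQ Q (X i) = X i) \<and> (\<forall>j<cdim Q. muQ Q (\<Psi> j) = \<Psi> j) \<and>
       (\<exists>m p. (\<forall>i<cdim Q. m i < cdim Q \<and> m (m i) = i \<and> muQ Q (X i) = X (m i)) \<and>
              (\<forall>j<cdim Q. p j < cdim Q \<and> p (p j) = j \<and> piQ Q (\<Psi> j) = \<Psi> (p j)) \<and>
              \<comment> \<open>(3), last line\<close>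
              (\<forall>i<cdim Q. ip Q (X (m i)) (X (m i)) = ip Q (X i) (X i)) \<and>
              (\<forall>j<cdim Q. ip Q (\<Psi> (p j)) (\<Psi> (p j)) = ip Q (\<Psi> j) (\<Psi> j)) \<and>
              (\<forall>i<cdim Q. \<forall>j<cdim Q. ip Q (X i) (\<Psi> (p j)) = cnj (ip Q (X i) (\<Psi> j))) \<and>
              (\<forall>i<cdim Q. \<forall>j<cdim Q. ip Q (X (m i)) (\<Psi> j) = cnj (ip Q (X i) (\<Psi> j)))) \<and>
       \<comment> \<open>(3)\<close>
       (\<forall>i<cdim Q. \<forall>i'<cdim Q. ip Q (X i) (X i') = (if i = i' then ip Q (X i) (X i) else 0)) \<and>
       (\<forall>j<cdim Q. \<forall>j'<cdim Q. ip Q (\<Psi> j) (\<Psi> j') = (if j = j' then ip Q (\<Psi> j) (\<Psi> j) else 0)) \<and>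
       (\<forall>i<cdim Q. ip Q (X i) (X i) = tr_dot Q (X i) \<and>
                   Im (tr_dot Q (X i)) = 0 \<and> Re (tr_dot Q (X i)) > 0) \<and>
       (\<forall>j<cdim Q. ip Q (\<Psi> j) (\<Psi> j) = tr_cross Q (\<Psi> j) \<and>
                   Im (tr_cross Q (\<Psi> j)) = 0 \<and> Re (tr_cross Q (\<Psi> j)) > 0) \<and>
       (\<forall>k<cdim Q. \<forall>l<cdim Q.
          (if k = l then ip Q (\<Psi> k) (\<Psi> k) else 0) =
          (\<Sum>i<cdim Q. inverse (ip Q (X i) (X i)) * cnj (ip Q (X i) (\<Psi> k)) * ip Q (X i) (\<Psi> l))) \<and>
       (\<forall>i<cdim Q. \<forall>j<cdim Q.
          (if i = j then ip Q (X i) (X i) else 0) =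
          (\<Sum>s<cdim Q. inverse (ip Q (\<Psi> s) (\<Psi> s)) * ip Q (X i) (\<Psi> s) * cnj (ip Q (X j) (\<Psi> s)))) \<and>
       \<comment> \<open>(5)\<close>
       crossp Q (scl Q (complex_of_real (1 / n)) (one_dot Q)) (scl Q (complex_of_real (1 / n)) (one_dot Q))
         = scl Q (complex_of_real (1 / n)) (one_dot Q) \<and>
       dotp Q (one_cross Q) (one_cross Q) = one_cross Q \<and>
       (\<exists>nn mm. (\<forall>j<cdim Q. nn j \<in> {0, 1}) \<and> (\<forall>i<cdim Q. mm i \<in> {0, 1}) \<and>
          scl Q (complex_of_real (1 / n)) (one_dot Q) = (\<Sum>j<cdim Q. scl Q (nn j) (\<Psi> j)) \<and>
          one_cross Q = (\<Sum>i<cdim Q. scl Q (mm i) (X i)) \<and>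
          (\<forall>i<cdim Q. ip Q (X i) (X i) = complex_of_real n * (\<Sum>j<cdim Q. ip Q (X i) (\<Psi> j) * nn j)) \<and>
          (\<forall>j<cdim Q. ip Q (\<Psi> j) (\<Psi> j) = (\<Sum>i<cdim Q. ip Q (X i) (\<Psi> j) * mm i))) \<and>
       ((scl Q (complex_of_real (1 / n)) (one_dot Q) = \<Psi> 0 \<and> one_cross Q = X 0) \<longrightarrow>
          (\<forall>i<cdim Q. ip Q (X i) (X i) = complex_of_real n * ip Q (X i) (\<Psi> 0)) \<and>
          (\<forall>j<cdim Q. ip Q (\<Psi> j) (\<Psi> j) = ip Q (X 0) (\<Psi> j))) \<and>
       \<comment> \<open>(4)\<close>
       (\<forall>(Q' :: 'r::ab_group_add chalg) n' X' \<Psi>'. char_alg Q' n' \<longrightarrow>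
          bij_betw X' {..<cdim Q} {e. min_idem (dotp Q') e} \<longrightarrow>
          bij_betw \<Psi>' {..<cdim Q} {e. min_idem (crossp Q') e} \<longrightarrow>
          (\<forall>i<cdim Q. ip Q' (X' i) (X' i) = ip Q (X i) (X i)) \<longrightarrow>
          (\<forall>j<cdim Q. ip Q' (\<Psi>' j) (\<Psi>' j) = ip Q (\<Psi> j) (\<Psi> j)) \<longrightarrow>
          (\<forall>i<cdim Q. \<forall>j<cdim Q. ip Q' (X' i) (\<Psi>' j) = ip Q (X i) (\<Psi> j)) \<longrightarrow>
          (\<forall>i<cdim Q. \<forall>k<cdim Q. muQ Q (X i) = X k \<longleftrightarrow> muQ Q' (X' i) = X' k) \<longrightarrow>
          (\<forall>j<cdim Q. \<forall>k<cdim Q. piQ Q (\<Psi> j) = \<Psi> k \<longleftrightarrow> piQ Q' (\<Psi>' j) = \<Psi>' k) \<longrightarrow>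
          (\<exists>\<phi>. chalg_iso Q Q' \<phi>)))"
proof -
  interpret character_algebra Q n by (rule character_algebra.intro) fact
  have indexed: "indexed_character_algebra Q n X \<Psi>"
    if "bij_betw X {..<cdim Q} {e. min_idem (dotp Q) e}" "bij_betw \<Psi> {..<cdim Q} {e. min_idem (crossp Q) e}"
    for X \<Psi>
    using assms that
    by (simp add: indexed_character_algebra_def indexed_character_algebra_axioms_def character_algebra_def)
  show ?thesis
    by (intro conjI allI impI; (rule ex_dot_Cd_iso ex_cross_Cd_iso
        dot.finite_minimal_idempotents cross.finite_minimal_idempotents
        card_dot_minimal_idempotents card_cross_minimal_idempotents cross_scaled_one_dot one_cross_idem
        indexed_character_algebra.pi_X[OF indexed] indexed_character_algebra.mu_\<Psi>[OF indexed]
        indexed_character_algebra.index_involutions[OF indexed]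
        indexed_character_algebra.ip_X_X[OF indexed] indexed_character_algebra.ip_\<Psi>_\<Psi>[OF indexed]
        indexed_character_algebra.ip_X_self[OF indexed] indexed_character_algebra.tr_dot_X[OF indexed]
        indexed_character_algebra.ip_\<Psi>_self[OF indexed] indexed_character_algebra.tr_cross_\<Psi>[OF indexed]
        indexed_character_algebra.orthogonality_columns[OF indexed]
        indexed_character_algebra.orthogonality_rows[OF indexed]
        indexed_character_algebra.unit_expansions[OF indexed]
        indexed_character_algebra.normalized_units[OF indexed]
        chalg_iso_if_same_character_data[OF indexed]; assumption))
qed

end
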